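(* Let $\alpha$ be an implicational formula that is a tautology of Propositional Minimal Implicational Logic. Then there is a proof of $\Rightarrow\alpha$ in the sequent calculus $\mathbf{LJ}^{\rightarrow}$ (without cut) of height at most $|\alpha|\cdot 2^{|\alpha|+1}$.
   Context: Formulas are built from atoms using only $\rightarrow$; $|\alpha|$ denotes the degree of $\alpha$, i.e. the number of occurrences of atomic symbols and connectives in $\alpha$. A formula is a tautology iff it is forced at every world of every Kripke model $\langle U,\preceq,\mathcal V\rangle$ ($\preceq$ a partial order, $\mathcal V$ monotone; $\alpha_1\rightarrow\alpha_2$ forced at $i$ iff for all $j\succeq i$, if $\alpha_1$ forced at $j$ then $\alpha_2$ forced at $j$). $\mathbf{LJ}^{\rightarrow}$ has sequents $\Delta\Rightarrow\gamma$ with exactly one formula on the right and rules: axiom $\Delta,\gamma\Rightarrow\gamma$; weakening, contraction and exchange on the left; $\rightarrow$-right: from $\Delta,\alpha\Rightarrow\beta$ infer $\Delta\Rightarrow\alpha\rightarrow\beta$; $\rightarrow$-left: from $\Delta,\alpha\rightarrow\beta\Rightarrow\alpha$ and $\Delta,\alpha\rightarrow\beta,\beta\Rightarrow\gamma$ infer $\Delta,\alpha\rightarrow\beta\Rightarrow\gamma$. *)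

theory Defs
  imports Main
begin

datatype 'a form = Atom 'a | Imp "'a form" "'a form"

fun deg :: "'a form \<Rightarrow> nat" where
  "deg (Atom p) = 1"
| "deg (Imp a b) = deg a + deg b + 1"

definition kripke_model :: "'w set \<Rightarrow> ('w \<Rightarrow> 'w \<Rightarrow> bool) \<Rightarrow> ('w \<Rightarrow> 'a \<Rightarrow> bool) \<Rightarrow> bool" where
  "kripke_model U le V \<longleftrightarrow>
     (\<forall>i\<in>U. le i i) \<and>
     (\<forall>i\<in>U. \<forall>j\<in>U. \<forall>k\<in>U. le i j \<longrightarrow> le j k \<longrightarrow> le i k) \<and>
     (\<forall>i\<in>U. \<forall>j\<in>U. le i j \<longrightarrow> le j i \<longrightarrow> i = j) \<and>
     (\<forall>i\<in>U. \<forall>j\<in>U. \<forall>p. le i j \<longrightarrow> V i p \<longrightarrow> V j p)"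

fun forces :: "'w set \<Rightarrow> ('w \<Rightarrow> 'w \<Rightarrow> bool) \<Rightarrow> ('w \<Rightarrow> 'a \<Rightarrow> bool) \<Rightarrow> 'w \<Rightarrow> 'a form \<Rightarrow> bool" where
  "forces U le V i (Atom p) = V i p"
| "forces U le V i (Imp a b) =
     (\<forall>j\<in>U. le i j \<longrightarrow> forces U le V j a \<longrightarrow> forces U le V j b)"

text \<open>Tautology: forced at every world of every Kripke model (worlds drawn from nat;
  HOL cannot quantify over all types inside a formula).\<close>
definition tautology :: "'a form \<Rightarrow> bool" where
  "tautology \<alpha> \<longleftrightarrow>
     (\<forall>(U::nat set) le V. kripke_model U le V \<longrightarrow> (\<forall>i\<in>U. forces U le V i \<alpha>))"

inductive LJ :: "'a form list \<Rightarrow> 'a form \<Rightarrow> nat \<Rightarrow> bool" where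
  ax: "LJ (\<Delta> @ [\<gamma>]) \<gamma> 0"
| weak: "LJ \<Delta> \<gamma> n \<Longrightarrow> LJ (\<Delta> @ [\<beta>]) \<gamma> (Suc n)"
| contr: "LJ (\<Delta> @ [\<beta>, \<beta>]) \<gamma> n \<Longrightarrow> LJ (\<Delta> @ [\<beta>]) \<gamma> (Suc n)"
| exch: "LJ (\<Delta>1 @ [\<beta>1, \<beta>2] @ \<Delta>2) \<gamma> n \<Longrightarrow> LJ (\<Delta>1 @ [\<beta>2, \<beta>1] @ \<Delta>2) \<gamma> (Suc n)"
| impR: "LJ (\<Delta> @ [\<alpha>]) \<beta> n \<Longrightarrow> LJ \<Delta> (Imp \<alpha> \<beta>) (Suc n)"
| impL: "LJ (\<Delta> @ [Imp \<alpha> \<beta>]) \<alpha> n \<Longrightarrow> LJ (\<Delta> @ [Imp \<alpha> \<beta>, \<beta>]) \<gamma> m \<Longrightarrow>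
         LJ (\<Delta> @ [Imp \<alpha> \<beta>]) \<gamma> (Suc (max n m))"

end

theory Submission imports Defs begin

text \<open>
  Contexts are treated as subsets of the set Sub of subformulas of \<alpha>, in a
  calculus without structural rules whose left rule must add a new formula to the
  context. A sequent that is not derivable there fails at a saturated set of subformulas
  in the canonical Kripke model, so tautologies are derivable. Heights are bounded by
  induction on the number of subformulas missing from the context S: once the goals
  derivable from all larger contexts are fixed at height c, the set of goals derivable
  from S at height c + j grows with j and is determined by its value at c + j - 1, so it
  is constant after at most |Sub| steps. This gives heights at most (|Sub - S| + 1)
  |Sub|; replaying a derivation in LJ costs at most max 2 |Sub| steps per rule
  (weakening, exchanges).
\<close>

lemma chain_stabilises:
  fixes A :: "nat \<Rightarrow> 'b set"
  assumes "finite B" "\<And>j. A j \<subseteq> A (Suc j)" "\<And>j. A j \<subseteq> B"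
  shows "\<exists>j \<le> card B. A (Suc j) = A j"
proof (rule ccontr)
  assume "\<not> ?thesis"
  then have grows: "A j \<subset> A (Suc j)" if "j \<le> card B" for j
    using assms(2) that by blast
  have "j \<le> card (A j)" if "j \<le> Suc (card B)" for j
    using that
  proof (induction j)
    case (Suc j)
    have "card (A j) < card (A (Suc j))"
      using grows Suc.prems assms(1,3) by (meson Suc_le_mono finite_subset psubset_card_mono)
    then show ?case using Suc by simp
  qed simp
  moreover have "card (A (Suc (card B))) \<le> card B" using assms(1,3) by (rule card_mono)
  ultimately show False by (metis not_less_eq_eq order.refl order_trans)
qed

lemma LJ_weaken_suffix: "LJ \<Delta> \<gamma> h \<Longrightarrow> LJ (\<Delta> @ zs) \<gamma> (h + length zs)"
proof (induction zs rule: rev_induct)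
  case (snoc z zs)
  then show ?case using LJ.weak[of "\<Delta> @ zs" \<gamma> "h + length zs" z] by simp
qed simp

lemma LJ_member: "\<gamma> \<in> set \<Delta> \<Longrightarrow> \<exists>h < length \<Delta>. LJ \<Delta> \<gamma> h"
proof -
  assume "\<gamma> \<in> set \<Delta>"
  then obtain ys zs where \<Delta>: "\<Delta> = ys @ [\<gamma>] @ zs" by (metis append_Cons append_Nil split_list)
  have "LJ \<Delta> \<gamma> (length zs)" using LJ_weaken_suffix[OF LJ.ax[of ys \<gamma>], of zs] \<Delta> by simp
  moreover have "length zs < length \<Delta>" using \<Delta> by simp
  ultimately show ?thesis by blast
qed

lemma LJ_move_last: "LJ (ys @ zs @ [x]) \<gamma> h \<Longrightarrow> LJ (ys @ x # zs) \<gamma> (h + length zs)"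
proof (induction zs arbitrary: ys)
  case (Cons z zs)
  have "LJ ((ys @ [z]) @ x # zs) \<gamma> (h + length zs)" using Cons.IH[of "ys @ [z]"] Cons.prems by simp
  then show ?case using LJ.exch[of ys z x zs \<gamma>] by simp
qed simp

lemma LJ_impL_at:
  assumes "LJ (ys @ zs @ [Imp a b]) a h1" "LJ (ys @ zs @ [Imp a b, b]) \<gamma> h2"
  shows "LJ (ys @ Imp a b # zs) \<gamma> (Suc (max h1 h2) + length zs)"
proof -
  have "LJ (ys @ zs @ [Imp a b]) \<gamma> (Suc (max h1 h2))"
    using LJ.impL[of "ys @ zs" a b h1 \<gamma> h2] assms by simp
  then show ?thesis by (rule LJ_move_last)
qed

text \<open>\<open>LJset S \<gamma> k\<close>: \<open>S \<Rightarrow> \<gamma>\<close> has a derivation of height at most \<open>k\<close>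
  (axioms are admitted at every height).\<close>

inductive LJset :: "'a form set \<Rightarrow> 'a form \<Rightarrow> nat \<Rightarrow> bool" where
  ax: "\<gamma> \<in> S \<Longrightarrow> LJset S \<gamma> k"
| impR: "LJset (insert a S) b k \<Longrightarrow> LJset S (Imp a b) (Suc k)"
| impL: "Imp a b \<in> S \<Longrightarrow> b \<notin> S \<Longrightarrow> LJset S a k \<Longrightarrow> LJset (insert b S) \<gamma> k \<Longrightarrow>
    LJset S \<gamma> (Suc k)"

lemma LJset_mono: "LJset S \<gamma> k \<Longrightarrow> k \<le> k' \<Longrightarrow> LJset S \<gamma> k'"
proof (induction arbitrary: k' rule: LJset.induct)
  case (ax \<gamma> S k)
  then show ?case by (simp add: LJset.ax)
next
  case (impR a S b k)
  then obtain l where "k' = Suc l" "k \<le> l" by (cases k') auto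
  then show ?case using impR by (auto intro: LJset.impR)
next
  case (impL a b S k \<gamma>)
  then obtain l where "k' = Suc l" "k \<le> l" by (cases k') auto
  then show ?case using impL by (auto intro: LJset.impL)
qed

definition derivable :: "'a form set \<Rightarrow> 'a form \<Rightarrow> bool" where
  "derivable S \<gamma> \<longleftrightarrow> (\<exists>k. LJset S \<gamma> k)"

lemma derivable_ax: "\<gamma> \<in> S \<Longrightarrow> derivable S \<gamma>"
  unfolding derivable_def by (blast intro: LJset.ax)

lemma derivable_impR: "derivable (insert a S) b \<Longrightarrow> derivable S (Imp a b)"
  unfolding derivable_def by (blast intro: LJset.impR)

lemma derivable_impL:
  assumes "Imp a b \<in> S" "derivable S a" "derivable (insert b S) \<gamma>"
  shows "derivable S \<gamma>"
proof (cases "b \<in> S")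
  case True
  then show ?thesis using assms(3) by (simp add: insert_absorb)
next
  case False
  obtain k l where "LJset S a k" "LJset (insert b S) \<gamma> l"
    using assms(2,3) unfolding derivable_def by blast
  then have "LJset S \<gamma> (Suc (max k l))"
    using LJset.impL[OF assms(1) False] LJset_mono by (metis max.cobounded1 max.cobounded2)
  then show ?thesis unfolding derivable_def by blast
qed

definition saturated :: "'a form set \<Rightarrow> bool" where
  "saturated T \<longleftrightarrow> (\<forall>a b. Imp a b \<in> T \<longrightarrow> derivable T a \<longrightarrow> b \<in> T)"

section \<open>Completeness for Kripke models\<close>

locale subformula_closed =
  fixes Sub :: "'a form set"
  assumes finite_Sub: "finite Sub"
    and Imp_Sub_left: "Imp a b \<in> Sub \<Longrightarrow> a \<in> Sub"
    and Imp_Sub_right: "Imp a b \<in> Sub \<Longrightarrow> b \<in> Sub"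
begin

lemma saturated_extension:
  "U \<subseteq> Sub \<Longrightarrow> \<not> derivable U c \<Longrightarrow> \<exists>T. U \<subseteq> T \<and> T \<subseteq> Sub \<and> saturated T \<and> \<not> derivable T c"
proof (induction "card (Sub - U)" arbitrary: U rule: less_induct)
  case less
  show ?case
  proof (cases "saturated U")
    case False
    then obtain a b where ab: "Imp a b \<in> U" "derivable U a" "b \<notin> U"
      unfolding saturated_def by blast
    have sub: "insert b U \<subseteq> Sub" using Imp_Sub_right ab(1) less.prems(1) by blast
    then have "Sub - insert b U \<subset> Sub - U" using ab(3) by blast
    then have "card (Sub - insert b U) < card (Sub - U)"
      using finite_Sub by (meson finite_Diff psubset_card_mono)
    moreover have "\<not> derivable (insert b U) c" using derivable_impL ab(1,2) less.prems(2) by blast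
    ultimately obtain T where "insert b U \<subseteq> T" "T \<subseteq> Sub" "saturated T" "\<not> derivable T c"
      using less.hyps[OF _ sub] by blast
    then show ?thesis by blast
  qed (use less.prems in blast)
qed

context
  fixes g :: "nat \<Rightarrow> 'a form set" and W :: "nat set"
  assumes worlds: "bij_betw g W {T. T \<subseteq> Sub \<and> saturated T}"
begin

abbreviation canonical_forces :: "nat \<Rightarrow> 'a form \<Rightarrow> bool" where
  "canonical_forces \<equiv> forces W (\<lambda>i j. g i \<subseteq> g j) (\<lambda>i p. Atom p \<in> g i)"

lemma canonical_kripke_model: "kripke_model W (\<lambda>i j. g i \<subseteq> g j) (\<lambda>i p. Atom p \<in> g i)"
  unfolding kripke_model_def
proof (intro conjI ballI allI impI)
  fix i j assume "i \<in> W" "j \<in> W" "g i \<subseteq> g j" "g j \<subseteq> g i"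
  then show "i = j" using inj_onD[OF bij_betw_imp_inj_on[OF worlds]] by blast
qed auto

lemma canonical_world: "i \<in> W \<Longrightarrow> g i \<subseteq> Sub \<and> saturated (g i)"
  using bij_betwE[OF worlds] by blast

lemma canonical_world_exists: "T \<subseteq> Sub \<Longrightarrow> saturated T \<Longrightarrow> \<exists>j\<in>W. g j = T"
proof -
  assume "T \<subseteq> Sub" "saturated T"
  then have "T \<in> g ` W" using bij_betw_imp_surj_on[OF worlds] by simp
  then show ?thesis by (simp add: image_iff eq_commute)
qed

lemma canonical_truth:
  "\<delta> \<in> Sub \<Longrightarrow> i \<in> W \<Longrightarrow>
    (\<delta> \<in> g i \<longrightarrow> canonical_forces i \<delta>) \<and> (\<not> derivable (g i) \<delta> \<longrightarrow> \<not> canonical_forces i \<delta>)"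
proof (induction \<delta> arbitrary: i)
  case (Atom p)
  then show ?case using derivable_ax by auto
next
  case (Imp a b)
  have a: "a \<in> Sub" and b: "b \<in> Sub" using Imp.prems(1) Imp_Sub_left Imp_Sub_right by blast+
  note IH_a = Imp.IH(1)[OF a] and IH_b = Imp.IH(2)[OF b]
  have "canonical_forces i (Imp a b)" if "Imp a b \<in> g i"
  proof -
    have "canonical_forces j b" if j: "j \<in> W" "g i \<subseteq> g j" "canonical_forces j a" for j
    proof -
      have "Imp a b \<in> g j" using \<open>Imp a b \<in> g i\<close> j(2) by blast
      moreover have "derivable (g j) a" using IH_a[OF j(1)] j(3) by blast
      ultimately have "b \<in> g j" using canonical_world[OF j(1)] unfolding saturated_def by blast
      then show ?thesis using IH_b[OF j(1)] by blast
    qed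
    then show ?thesis by simp
  qed
  moreover have "\<not> canonical_forces i (Imp a b)" if "\<not> derivable (g i) (Imp a b)"
  proof -
    have "insert a (g i) \<subseteq> Sub" using a canonical_world[OF Imp.prems(2)] by simp
    moreover have "\<not> derivable (insert a (g i)) b" using that derivable_impR by blast
    ultimately obtain T where T: "insert a (g i) \<subseteq> T" "T \<subseteq> Sub" "saturated T" "\<not> derivable T b"
      by (meson saturated_extension)
    then obtain j where j: "j \<in> W" "g j = T" using canonical_world_exists by blast
    have "canonical_forces j a" using IH_a[OF j(1)] T(1) j(2) by blast
    moreover have "\<not> canonical_forces j b" using IH_b[OF j(1)] T(4) j(2) by blast
    moreover have "g i \<subseteq> g j" using T(1) j(2) by blast
    ultimately show ?thesis using j(1) by auto
  qed
  ultimately show ?case by blast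
qed

end

lemma tautology_derivable:
  assumes "tautology \<gamma>" "\<gamma> \<in> Sub"
  shows "derivable {} \<gamma>"
proof (rule ccontr)
  let ?W = "{T. T \<subseteq> Sub \<and> saturated T}"
  assume "\<not> derivable {} \<gamma>"
  then obtain T where T: "T \<subseteq> Sub" "saturated T" "\<not> derivable T \<gamma>"
    using saturated_extension[of "{}"] by blast
  have "finite ?W" using finite_Sub by simp
  then obtain g where worlds: "bij_betw g {0..<card ?W} ?W"
    using ex_bij_betw_nat_finite by blast
  then obtain j where "j \<in> {0..<card ?W}" "g j = T"
    using canonical_world_exists T(1,2) by blast
  then show False
    using assms canonical_kripke_model[OF worlds] canonical_truth[OF worlds] T(3)
    unfolding tautology_def by blast
qed

section \<open>Bounding derivation heights\<close>

context
  fixes S :: "'a form set" and c :: nat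
  assumes S_Sub: "S \<subseteq> Sub"
    and above: "\<And>T \<delta> k. S \<subset> T \<Longrightarrow> T \<subseteq> Sub \<Longrightarrow> \<delta> \<in> Sub \<Longrightarrow> LJset T \<delta> k \<Longrightarrow> LJset T \<delta> c"
begin

lemma LJset_level_step:
  assumes "c \<le> k"
    and stable: "\<And>\<delta>. \<delta> \<in> Sub \<Longrightarrow> LJset S \<delta> (Suc k) \<Longrightarrow> LJset S \<delta> k"
    and "\<gamma> \<in> Sub" "LJset S \<gamma> (Suc (Suc k))"
  shows "LJset S \<gamma> (Suc k)"
proof -
  have above_k: "LJset T \<delta> k" if "S \<subset> T" "T \<subseteq> Sub" "\<delta> \<in> Sub" "LJset T \<delta> (Suc k)" for T \<delta>
    using above[OF that] LJset_mono \<open>c \<le> k\<close> by blast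
  from \<open>LJset S \<gamma> (Suc (Suc k))\<close> show ?thesis
  proof cases
    case ax
    then show ?thesis by (simp add: LJset.ax)
  next
    case (impR a b)
    have a: "a \<in> Sub" and b: "b \<in> Sub" using impR(1) \<open>\<gamma> \<in> Sub\<close> Imp_Sub_left Imp_Sub_right by blast+
    have "LJset (insert a S) b k"
    proof (cases "a \<in> S")
      case True
      then show ?thesis using stable[OF b] impR(2) by (simp add: insert_absorb)
    next
      case False
      then show ?thesis using above_k[OF _ _ b impR(2)] a S_Sub by blast
    qed
    then show ?thesis unfolding impR(1) by (rule LJset.impR)
  next
    case (impL a b)
    have a: "a \<in> Sub" and b: "b \<in> Sub" using impL(1) S_Sub Imp_Sub_left Imp_Sub_right by blast+
    have "LJset S a k" using stable[OF a impL(3)] .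
    moreover have "LJset (insert b S) \<gamma> k"
      using above_k[OF _ _ \<open>\<gamma> \<in> Sub\<close> impL(4)] impL(2) b S_Sub by blast
    ultimately show ?thesis using LJset.impL[OF impL(1,2)] by blast
  qed
qed

lemma LJset_level_stable:
  assumes "c \<le> k"
    and stable: "\<And>\<delta>. \<delta> \<in> Sub \<Longrightarrow> LJset S \<delta> (Suc k) \<Longrightarrow> LJset S \<delta> k"
    and "\<gamma> \<in> Sub" "LJset S \<gamma> k'"
  shows "LJset S \<gamma> k"
proof -
  have stable_above: "LJset S \<delta> l" if "k \<le> l" "\<delta> \<in> Sub" "LJset S \<delta> (Suc l)" for l \<delta>
    using that
  proof (induction l arbitrary: \<delta> rule: dec_induct)
    case base
    then show ?case using stable by blast
  next
    case (step l)
    then show ?case using LJset_level_step \<open>c \<le> k\<close> by simp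
  qed
  show ?thesis
    using \<open>\<gamma> \<in> Sub\<close> \<open>LJset S \<gamma> k'\<close>
  proof (induction k' arbitrary: \<gamma>)
    case 0
    then show ?case using LJset_mono by blast
  next
    case (Suc l)
    show ?case
    proof (cases "k \<le> l")
      case True
      then show ?thesis using Suc stable_above by blast
    next
      case False
      then show ?thesis using LJset_mono[OF Suc.prems(2)] by simp
    qed
  qed
qed

end

lemma LJset_height_reduction:
  "S \<subseteq> Sub \<Longrightarrow> \<gamma> \<in> Sub \<Longrightarrow> LJset S \<gamma> k \<Longrightarrow> LJset S \<gamma> ((card (Sub - S) + 1) * card Sub)"
proof (induction "card (Sub - S)" arbitrary: S \<gamma> k rule: less_induct)
  case less
  define c where "c = card (Sub - S) * card Sub"
  have above: "LJset T \<delta> c" if "S \<subset> T" "T \<subseteq> Sub" "\<delta> \<in> Sub" "LJset T \<delta> k" for T \<delta> k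
  proof -
    have "Sub - T \<subset> Sub - S" using that(1,2) by blast
    then have "card (Sub - T) < card (Sub - S)" using finite_Sub by (meson finite_Diff psubset_card_mono)
    then have "LJset T \<delta> ((card (Sub - T) + 1) * card Sub)" using less.hyps that(2-4) by blast
    moreover have "(card (Sub - T) + 1) * card Sub \<le> c"
      unfolding c_def using \<open>card (Sub - T) < card (Sub - S)\<close> by (intro mult_le_mono1) simp
    ultimately show ?thesis using LJset_mono by blast
  qed
  obtain j where j: "j \<le> card Sub"
    "{\<delta> \<in> Sub. LJset S \<delta> (c + Suc j)} = {\<delta> \<in> Sub. LJset S \<delta> (c + j)}"
    using chain_stabilises[OF finite_Sub, of "\<lambda>j. {\<delta> \<in> Sub. LJset S \<delta> (c + j)}"] LJset_mono
    by fastforce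
  have "LJset S \<gamma> (c + j)"
  proof (rule LJset_level_stable[OF less.prems(1) above])
    show "LJset S \<delta> (c + j)" if "\<delta> \<in> Sub" "LJset S \<delta> (Suc (c + j))" for \<delta>
      using j(2) that by (auto simp: set_eq_iff)
  qed (use less.prems in auto)
  then show ?case using LJset_mono j(1) unfolding c_def by fastforce
qed

section \<open>Replaying derivations in LJ\<close>

lemma LJset_to_LJ:
  assumes "LJset S \<gamma> k" "S \<subseteq> Sub" "\<gamma> \<in> Sub" "distinct xs" "set xs = S"
  shows "\<exists>h. LJ xs \<gamma> h \<and> h < k * max 2 (card Sub) + card Sub"
  using assms
proof (induction arbitrary: xs rule: LJset.induct)
  case (ax \<gamma> S k)
  obtain h where "LJ xs \<gamma> h" "h < length xs" using LJ_member ax by blast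
  moreover have "length xs \<le> card Sub"
    using ax.prems distinct_card card_mono[OF finite_Sub] by metis
  ultimately show ?case by (metis order_less_le_trans trans_le_add2)
next
  case (impR a S b k)
  have a: "a \<in> Sub" and b: "b \<in> Sub" using impR.prems(2) Imp_Sub_left Imp_Sub_right by blast+
  obtain h where h: "LJ (xs @ [a]) b h" "h < k * max 2 (card Sub) + card Sub + 1"
  proof (cases "a \<in> S")
    case True
    then obtain h where "LJ xs b h" "h < k * max 2 (card Sub) + card Sub"
      using impR.IH[of xs] impR.prems b by (auto simp: insert_absorb)
    then show ?thesis using that LJ.weak by fastforce
  next
    case False
    then show ?thesis using that impR.IH[of "xs @ [a]"] impR.prems a b by fastforce
  qed
  have "LJ xs (Imp a b) (Suc h)" using h(1) by (rule LJ.impR)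
  moreover have "Suc h < Suc k * max 2 (card Sub) + card Sub" using h(2) by simp
  ultimately show ?case by blast
next
  case (impL a b S k \<gamma>)
  have a: "a \<in> Sub" and b: "b \<in> Sub" using impL.hyps(1) impL.prems(1) Imp_Sub_left Imp_Sub_right by blast+
  obtain ys zs where xs: "xs = ys @ Imp a b # zs"
    using impL.hyps(1) impL.prems(4) by (metis split_list)
  define xs' where "xs' = ys @ zs @ [Imp a b]"
  have xs': "distinct xs'" "set xs' = S" using impL.prems(3,4) xs unfolding xs'_def by auto
  obtain h1 where h1: "LJ xs' a h1" "h1 < k * max 2 (card Sub) + card Sub"
    using impL.IH(1) impL.prems(1) a xs' by blast
  obtain h2 where h2: "LJ (xs' @ [b]) \<gamma> h2" "h2 < k * max 2 (card Sub) + card Sub"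
    using impL.IH(2)[of "xs' @ [b]"] impL.hyps(2) impL.prems(1,2) b xs' by auto
  have "LJ xs \<gamma> (Suc (max h1 h2) + length zs)"
    using LJ_impL_at h1(1) h2(1) xs unfolding xs'_def by simp
  moreover have "length zs + 2 \<le> card Sub"
  proof -
    have "card (insert b S) \<le> card Sub" using impL.prems(1) b card_mono[OF finite_Sub] by simp
    moreover have "card (insert b S) = length xs + 1"
      using impL.hyps(2) impL.prems(3,4) distinct_card finite_set by (metis Suc_eq_plus1 card_insert_disjoint)
    ultimately show ?thesis using xs by simp
  qed
  then have "Suc (max h1 h2) + length zs < Suc k * max 2 (card Sub) + card Sub"
    using h1(2) h2(2) by simp
  ultimately show ?case by blast
qed

end

fun subforms :: "'a form \<Rightarrow> 'a form set" where
  "subforms (Atom p) = {Atom p}"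
| "subforms (Imp a b) = insert (Imp a b) (subforms a \<union> subforms b)"

lemma finite_subforms: "finite (subforms \<alpha>)"
  by (induction \<alpha>) auto

lemma card_subforms_le_deg: "card (subforms \<alpha>) \<le> deg \<alpha>"
proof (induction \<alpha>)
  case (Imp a b)
  have "card (subforms (Imp a b)) \<le> card (subforms a \<union> subforms b) + 1"
    by (simp add: card_insert_if finite_subforms)
  also have "\<dots> \<le> card (subforms a) + card (subforms b) + 1"
    using card_Un_le by simp
  finally show ?case using Imp by simp
qed simp

lemma subforms_self: "\<alpha> \<in> subforms \<alpha>"
  by (cases \<alpha>) auto

lemma subformula_closed_subforms: "subformula_closed (subforms \<alpha>)"
proof
  fix a b assume "Imp a b \<in> subforms \<alpha>"
  then show "a \<in> subforms \<alpha>" and "b \<in> subforms \<alpha>"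
    by (induction \<alpha>) (auto simp: subforms_self)
qed (rule finite_subforms)

lemma square_plus_le_two_power: "2 \<le> n \<Longrightarrow> n * n + n + 1 \<le> (2::nat) ^ (n + 1)"
proof (induction n rule: nat_induct_at_least)
  case (Suc n)
  have "2 * n \<le> n * n" using Suc.hyps by (intro mult_le_mono1)
  then have "Suc n \<le> n * n" using Suc.hyps by linarith
  then have "Suc n * Suc n + Suc n + 1 \<le> 2 * (n * n + n + 1)" by (simp add: algebra_simps)
  also have "\<dots> \<le> 2 * 2 ^ (n + 1)" using Suc.IH by simp
  finally show ?case by simp
qed simp

lemma height_bound_le:
  fixes s n :: nat
  assumes "s \<le> n"
  shows "(s + 1) * s * max 2 s + s \<le> n * 2 ^ (n + 1) + 1"
proof -
  have "(s + 1) * s * max 2 s + s \<le> (n + 1) * n * max 2 n + n"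
    using assms by (intro add_mono mult_le_mono) auto
  also have "\<dots> \<le> n * 2 ^ (n + 1) + 1"
  proof (cases "n \<le> 1")
    case True
    then show ?thesis by (cases n) auto
  next
    case False
    then have "(n + 1) * n * max 2 n + n = n * (n * n + n + 1)" by (simp add: algebra_simps)
    also have "\<dots> \<le> n * 2 ^ (n + 1)" using False by (intro mult_le_mono2 square_plus_le_two_power) simp
    finally show ?thesis by simp
  qed
  finally show ?thesis .
qed

theorem theorem1:
  fixes \<alpha> :: "'a form"
  assumes "tautology \<alpha>"
  shows "\<exists>h. LJ [] \<alpha> h \<and> h \<le> deg \<alpha> * 2 ^ (deg \<alpha> + 1)"
proof -
  interpret subformula_closed "subforms \<alpha>"
    by (rule subformula_closed_subforms)
  let ?s = "card (subforms \<alpha>)"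
  obtain k where "LJset {} \<alpha> k"
    using tautology_derivable[OF assms subforms_self] unfolding derivable_def by blast
  then have "LJset {} \<alpha> ((?s + 1) * ?s)"
    using LJset_height_reduction[of "{}" \<alpha>] subforms_self[of \<alpha>] by simp
  then obtain h where "LJ [] \<alpha> h" "h < (?s + 1) * ?s * max 2 ?s + ?s"
    using LJset_to_LJ[of "{}" \<alpha> _ "[]"] subforms_self by auto
  moreover have "(?s + 1) * ?s * max 2 ?s + ?s \<le> deg \<alpha> * 2 ^ (deg \<alpha> + 1) + 1"
    using height_bound_le[OF card_subforms_le_deg] .
  ultimately show ?thesis by auto
qed

end
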